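(* Let $\Psi$ be a well-formed declarative context and $\beta\notin\Psi$. If $\mathcal D$ is a derivation of $\Psi\vdash A\le\forall\beta.B$, then there is a derivation $\mathcal D'$ of $\Psi,\beta\vdash A\le B$ whose size is strictly smaller than that of $\mathcal D$.
   Context: Types $A,B ::= 1\mid\alpha\mid\forall\alpha.A\mid A\to B$ (bound variables may be renamed, so $\beta$ can be assumed not declared in $\Psi$); monotypes $\tau ::= 1\mid\alpha\mid\tau\to\tau'$. Declarative contexts $\Psi ::= \cdot\mid\Psi,\alpha\mid\Psi,x:A$. Well-formedness $\Psi\vdash A$: all free type variables of $A$ are declared in $\Psi$. Declarative subtyping $\Psi\vdash A\le B$ is the least relation with: $\alpha\in\Psi\Rightarrow\Psi\vdash\alpha\le\alpha$; $\Psi\vdash1\le1$; ($\Psi\vdash B_1\le A_1$, $\Psi\vdash A_2\le B_2$) $\Rightarrow\Psi\vdash A_1\to A_2\le B_1\to B_2$; ($\Psi\vdash\tau$ monotype, $\Psi\vdash[\tau/\alpha]A\le B$) $\Rightarrow\Psi\vdash\forall\alpha.A\le B$; ($\Psi,\beta\vdash A\le B$) $\Rightarrow\Psi\vdash A\le\forall\beta.B$. The size of a derivation is its number of rule instances. *)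

theory Defs
  imports Main
begin

text \<open>Types in locally nameless representation: bound type variables are de Bruijn
  indices (BVar), free type variables are names (FVar). \<open>All A\<close> is \<open>\<forall>\<alpha>. A\<close> where
  the bound variable is index 0 in A.\<close>

type_synonym tvname = nat
type_synonym vname = nat

datatype ty = Unit | BVar nat | FVar tvname | All ty | Arr ty ty

fun open_rec :: "nat \<Rightarrow> ty \<Rightarrow> ty \<Rightarrow> ty" where
  "open_rec k u Unit = Unit"
| "open_rec k u (BVar i) = (if i = k then u else BVar i)"
| "open_rec k u (FVar a) = FVar a"
| "open_rec k u (All A) = All (open_rec (Suc k) u A)"
| "open_rec k u (Arr A B) = Arr (open_rec k u A) (open_rec k u B)"

text \<open>\<open>open_ty A u\<close> is \<open>[u/\<alpha>]A'\<close> when \<open>All A\<close> represents \<open>\<forall>\<alpha>.A'\<close>.\<close>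
definition open_ty :: "ty \<Rightarrow> ty \<Rightarrow> ty" where
  "open_ty A u = open_rec 0 u A"

fun ftv :: "ty \<Rightarrow> tvname set" where
  "ftv Unit = {}"
| "ftv (BVar i) = {}"
| "ftv (FVar a) = {a}"
| "ftv (All A) = ftv A"
| "ftv (Arr A B) = ftv A \<union> ftv B"

fun lc_at :: "nat \<Rightarrow> ty \<Rightarrow> bool" where
  "lc_at k Unit = True"
| "lc_at k (BVar i) = (i < k)"
| "lc_at k (FVar a) = True"
| "lc_at k (All A) = lc_at (Suc k) A"
| "lc_at k (Arr A B) = (lc_at k A \<and> lc_at k B)"

fun mono :: "ty \<Rightarrow> bool" where
  "mono Unit = True"
| "mono (BVar i) = True"
| "mono (FVar a) = True"
| "mono (All A) = False"
| "mono (Arr A B) = (mono A \<and> mono B)"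

text \<open>Declarative contexts; \<open>\<Psi>, e\<close> is \<open>\<Psi> @ [e]\<close>.\<close>
datatype entry = TV tvname | V vname ty
type_synonym ctx = "entry list"

fun tvars :: "ctx \<Rightarrow> tvname set" where
  "tvars [] = {}"
| "tvars (TV a # G) = insert a (tvars G)"
| "tvars (V x A # G) = tvars G"

fun vars :: "ctx \<Rightarrow> vname set" where
  "vars [] = {}"
| "vars (TV a # G) = vars G"
| "vars (V x A # G) = insert x (vars G)"

definition wf_ty :: "ctx \<Rightarrow> ty \<Rightarrow> bool" where
  "wf_ty G A \<longleftrightarrow> lc_at 0 A \<and> ftv A \<subseteq> tvars G"

inductive wf_ctx :: "ctx \<Rightarrow> bool" where
  "wf_ctx []"
| "wf_ctx G \<Longrightarrow> a \<notin> tvars G \<Longrightarrow> wf_ctx (G @ [TV a])"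
| "wf_ctx G \<Longrightarrow> x \<notin> vars G \<Longrightarrow> wf_ty G A \<Longrightarrow> wf_ctx (G @ [V x A])"

text \<open>\<open>sub G A B n\<close>: there is a derivation of \<open>G \<turnstile> A \<le> B\<close> with exactly n rule
  instances.  In the \<forall>R rule, the bound variable is renamed to a name \<beta> not
  declared in G and not free in A, B.\<close>
inductive sub :: "ctx \<Rightarrow> ty \<Rightarrow> ty \<Rightarrow> nat \<Rightarrow> bool" where
  sub_var: "a \<in> tvars G \<Longrightarrow> sub G (FVar a) (FVar a) 1"
| sub_unit: "sub G Unit Unit 1"
| sub_arr: "sub G B1 A1 n1 \<Longrightarrow> sub G A2 B2 n2 \<Longrightarrow>
             sub G (Arr A1 A2) (Arr B1 B2) (Suc (n1 + n2))"
| sub_allL: "mono t \<Longrightarrow> wf_ty G t \<Longrightarrow> sub G (open_ty A t) B n \<Longrightarrow>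
             sub G (All A) B (Suc n)"
| sub_allR: "b \<notin> tvars G \<Longrightarrow> b \<notin> ftv A \<Longrightarrow> b \<notin> ftv B \<Longrightarrow>
             sub (G @ [TV b]) A (open_ty B (FVar b)) n \<Longrightarrow> sub G A (All B) (Suc n)"

end

theory Submission
  imports Defs "HOL-Combinatorics.Transposition"
begin

text \<open>A \<open>\<forall>L\<close> step is kept and the induction hypothesis
  applies to its premise.  A \<open>\<forall>R\<close> step must be the one introducing \<open>\<forall>\<beta>.B\<close>; its premise
  already has the required shape, except that the rule chose some fresh name \<open>\<gamma>\<close> instead
  of \<open>\<beta>\<close>.  Swapping \<open>\<gamma>\<close> and \<open>\<beta>\<close> throughout the premise's derivation fixes the name
  without changing the size, and we drop the \<open>\<forall>R\<close> instance itself.\<close>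

fun rename_ty :: "(tvname \<Rightarrow> tvname) \<Rightarrow> ty \<Rightarrow> ty" where
  "rename_ty f Unit = Unit"
| "rename_ty f (BVar i) = BVar i"
| "rename_ty f (FVar a) = FVar (f a)"
| "rename_ty f (All A) = All (rename_ty f A)"
| "rename_ty f (Arr A B) = Arr (rename_ty f A) (rename_ty f B)"

fun rename_entry :: "(tvname \<Rightarrow> tvname) \<Rightarrow> entry \<Rightarrow> entry" where
  "rename_entry f (TV a) = TV (f a)"
| "rename_entry f (V x A) = V x (rename_ty f A)"

lemma tvars_append [simp]: "tvars (G @ H) = tvars G \<union> tvars H"
  by (induction G rule: tvars.induct) auto

lemma tvars_map_rename_entry [simp]: "tvars (map (rename_entry f) G) = f ` tvars G"
  by (induction G rule: tvars.induct) auto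

lemma ftv_rename_ty [simp]: "ftv (rename_ty f A) = f ` ftv A"
  by (induction A) auto

lemma lc_at_rename_ty [simp]: "lc_at k (rename_ty f A) = lc_at k A"
  by (induction A arbitrary: k) auto

lemma mono_rename_ty [simp]: "mono (rename_ty f A) = mono A"
  by (induction A) auto

lemma rename_ty_open_rec:
  "rename_ty f (open_rec k u A) = open_rec k (rename_ty f u) (rename_ty f A)"
  by (induction A arbitrary: k) auto

lemma rename_ty_open_ty:
  "rename_ty f (open_ty A u) = open_ty (rename_ty f A) (rename_ty f u)"
  by (simp add: open_ty_def rename_ty_open_rec)

lemma rename_ty_id_on_ftv: "(\<And>a. a \<in> ftv A \<Longrightarrow> f a = a) \<Longrightarrow> rename_ty f A = A"
  by (induction A) auto

lemma ftv_subset_open_ty: "ftv A \<subseteq> ftv (open_ty A u)"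
proof -
  have "ftv A \<subseteq> ftv (open_rec k u A)" for k
    by (induction A arbitrary: k) auto
  then show ?thesis
    by (simp add: open_ty_def)
qed

lemma sub_ftv: "sub G A B n \<Longrightarrow> ftv A \<subseteq> tvars G \<and> ftv B \<subseteq> tvars G"
proof (induction rule: sub.induct)
  case (sub_allL t G A B n)
  then show ?case using ftv_subset_open_ty[of A t] by auto
next
  case (sub_allR b G A B n)
  then show ?case using ftv_subset_open_ty[of B "FVar b"] by auto
qed auto

lemma sub_rename:
  assumes "sub G A B n" and "inj f"
  shows "sub (map (rename_entry f) G) (rename_ty f A) (rename_ty f B) n"
  using assms
proof (induction rule: sub.induct)
  case (sub_var a G)
  then show ?case using sub.sub_var[of "f a"] by simp
next
  case (sub_unit G)
  then show ?case using sub.sub_unit by simp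
next
  case (sub_arr G B1 A1 n1 A2 B2 n2)
  then show ?case by (auto intro: sub.sub_arr)
next
  case (sub_allL t G A B n)
  then have "sub (map (rename_entry f) G) (All (rename_ty f A)) (rename_ty f B) (Suc n)"
    by (intro sub.sub_allL[where t = "rename_ty f t"]) (auto simp: rename_ty_open_ty wf_ty_def)
  then show ?case by simp
next
  case (sub_allR b G A B n)
  then have "sub (map (rename_entry f) G) (rename_ty f A) (All (rename_ty f B)) (Suc n)"
    by (intro sub.sub_allR[where b = "f b"]) (auto simp: rename_ty_open_ty inj_image_mem_iff)
  then show ?case by simp
qed

lemma sub_cong_tvars: "sub G A B n \<Longrightarrow> tvars G = tvars G' \<Longrightarrow> sub G' A B n"
proof (induction arbitrary: G' rule: sub.induct)
  case (sub_var a G)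
  then show ?case using sub.sub_var[of a G'] by simp
next
  case (sub_unit G)
  then show ?case using sub.sub_unit by simp
next
  case (sub_arr G B1 A1 n1 A2 B2 n2)
  then show ?case by (auto intro: sub.sub_arr)
next
  case (sub_allL t G A B n)
  then show ?case by (auto intro!: sub.sub_allL simp: wf_ty_def)
next
  case (sub_allR b G A B n)
  then show ?case by (auto intro!: sub.sub_allR)
qed

lemma sub_rename_fresh_tvar:
  assumes sub: "sub (G @ [TV c]) A (open_ty B (FVar c)) n"
    and fresh: "b \<notin> tvars G" "c \<notin> tvars G"
    and closed: "ftv A \<subseteq> tvars G" "ftv B \<subseteq> tvars G"
  shows "sub (G @ [TV b]) A (open_ty B (FVar b)) n"
proof -
  let ?f = "transpose c b"
  have "sub (map (rename_entry ?f) (G @ [TV c])) (rename_ty ?f A)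
      (rename_ty ?f (open_ty B (FVar c))) n"
    using sub_rename[OF sub inj_transpose] .
  moreover have fixes_G: "?f a = a" if "a \<in> tvars G" for a
    using fresh that by (metis transpose_apply_other)
  then have "rename_ty ?f A = A" "rename_ty ?f B = B"
    using closed by (auto intro!: rename_ty_id_on_ftv)
  moreover have "tvars (map (rename_entry ?f) (G @ [TV c])) = tvars (G @ [TV b])"
    using fixes_G by (simp add: image_Un image_cong[OF refl fixes_G])
  ultimately show ?thesis
    by (simp add: rename_ty_open_ty sub_cong_tvars)
qed

lemma sub_All_right_inverse:
  "sub G A C n \<Longrightarrow> C = All B \<Longrightarrow> b \<notin> tvars G \<Longrightarrow>
    \<exists>m < n. sub (G @ [TV b]) A (open_ty B (FVar b)) m"
proof (induction arbitrary: B rule: sub.induct)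
  case (sub_allL t G A C n)
  then obtain m where "m < n" and m: "sub (G @ [TV b]) (open_ty A t) (open_ty B (FVar b)) m"
    by blast
  moreover have "wf_ty (G @ [TV b]) t"
    using \<open>wf_ty G t\<close> by (auto simp: wf_ty_def)
  ultimately have "sub (G @ [TV b]) (All A) (open_ty B (FVar b)) (Suc m)" "Suc m < Suc n"
    using sub.sub_allL[OF \<open>mono t\<close>] by auto
  then show ?case by blast
next
  case (sub_allR c G A C n)
  have premise: "sub (G @ [TV c]) A (open_ty B (FVar c)) n"
    using sub_allR.hyps(4) sub_allR.prems(1) by simp
  have closed_A: "ftv A \<subseteq> tvars G" and "ftv (open_ty B (FVar c)) \<subseteq> tvars G \<union> {c}"
    using sub_ftv[OF premise] sub_allR.hyps(2) by auto
  moreover have "c \<notin> ftv B"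
    using sub_allR.hyps(3) sub_allR.prems(1) by simp
  ultimately have closed_B: "ftv B \<subseteq> tvars G"
    using ftv_subset_open_ty[of B "FVar c"] by blast
  have "sub (G @ [TV b]) A (open_ty B (FVar b)) n"
    using premise sub_allR.prems(2) sub_allR.hyps(1) closed_A closed_B
    by (rule sub_rename_fresh_tvar)
  then show ?case by blast
qed simp_all

theorem mainTheorem13:
  assumes "wf_ctx G"
    and "b \<notin> tvars G"
    and "sub G A (All B) n"
  shows "\<exists>m < n. sub (G @ [TV b]) A (open_ty B (FVar b)) m"
  using sub_All_right_inverse[OF assms(3) refl assms(2)] .

end
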